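(* Let $(G,\cdot)$ be a WIPL with identity $e$, let $(H,\circ)$ be a WIPL with identity $e'$, and let $(A,B,C)$ be an isotopism from $(G,\cdot)$ to $(H,\circ)$. Put $a=e'A^{-1}$ and $b=e'B^{-1}$. Assume that either $(x\cdot y)^\rho=x^\rho\cdot y^\lambda$ for all $x,y\in G$, or $(x\cdot y)^\lambda=x^\lambda\cdot y^\rho$ for all $x,y\in G$. Then $C$ is an isomorphism from $(G,\cdot)$ onto $(H,\circ)$ if and only if $(L_b,R_a,I)\in AUT(G,\cdot)$. Moreover, in that case $(G,\cdot)$ and $(H,\circ)$ are (isomorphic) cross inverse property loops, $R_aL_b=I$ and $b\cdot a=e$.
   Context: Maps are written on the right of their arguments ($xU$) and composed left to right: $UV$ means first apply $U$, then $V$; $I$ is the identity map. For a loop $(L,\cdot)$ with identity $e$, $x^\rho$ and $x^\lambda$ denote the right and left inverses of $x$ ($x x^\rho=e=x^\lambda x$), and $J_\rho:x\mapsto x^\rho$, $J_\lambda:x\mapsto x^\lambda$, $L_x:y\mapsto xy$, $R_x:y\mapsto yx$. $L$ is a weak inverse property loop (WIPL) if $xy\cdot z=e$ implies $x\cdot yz=e$ for all $x,y,z\in L$; it is a cross inverse property loop (CIPL) if $xy\cdot x^\rho=y$ for all $x,y\in L$. A triple $(U,V,W)$ of bijections $G\to H$ between loops $(G,\cdot)$ and $(H,\circ)$ is an isotopism if $xU\circ yV=(x\cdot y)W$ for all $x,y\in G$; an autotopism is an isotopism of a loop to itself, and $AUT(G,\cdot)$ denotes the group of autotopisms under componentwise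 composition. *)

theory Defs
  imports Main
begin

text \<open>A loop is given by a carrier set, a binary operation and an identity element.
Maps are represented as ordinary functions: the paper's xU is U x.\<close>

definition loop :: "'a set \<Rightarrow> ('a \<Rightarrow> 'a \<Rightarrow> 'a) \<Rightarrow> 'a \<Rightarrow> bool" where
  "loop G m e \<longleftrightarrow> e \<in> G \<and> (\<forall>x\<in>G. \<forall>y\<in>G. m x y \<in> G)
     \<and> (\<forall>x\<in>G. m e x = x \<and> m x e = x)
     \<and> (\<forall>a\<in>G. \<forall>b\<in>G. (\<exists>!x. x \<in> G \<and> m a x = b) \<and> (\<exists>!y. y \<in> G \<and> m y a = b))"

definition rinv :: "'a set \<Rightarrow> ('a \<Rightarrow> 'a \<Rightarrow> 'a) \<Rightarrow> 'a \<Rightarrow> 'a \<Rightarrow> 'a" where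
  "rinv G m e x = (THE y. y \<in> G \<and> m x y = e)"

definition linv :: "'a set \<Rightarrow> ('a \<Rightarrow> 'a \<Rightarrow> 'a) \<Rightarrow> 'a \<Rightarrow> 'a \<Rightarrow> 'a" where
  "linv G m e x = (THE y. y \<in> G \<and> m y x = e)"

definition wipl :: "'a set \<Rightarrow> ('a \<Rightarrow> 'a \<Rightarrow> 'a) \<Rightarrow> 'a \<Rightarrow> bool" where
  "wipl G m e \<longleftrightarrow> loop G m e \<and>
     (\<forall>x\<in>G. \<forall>y\<in>G. \<forall>z\<in>G. m (m x y) z = e \<longrightarrow> m x (m y z) = e)"

definition cipl :: "'a set \<Rightarrow> ('a \<Rightarrow> 'a \<Rightarrow> 'a) \<Rightarrow> 'a \<Rightarrow> bool" where
  "cipl G m e \<longleftrightarrow> loop G m e \<and>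
     (\<forall>x\<in>G. \<forall>y\<in>G. m (m x y) (rinv G m e x) = y)"

definition isotopism :: "'a set \<Rightarrow> ('a \<Rightarrow> 'a \<Rightarrow> 'a) \<Rightarrow> 'b set \<Rightarrow> ('b \<Rightarrow> 'b \<Rightarrow> 'b)
    \<Rightarrow> ('a \<Rightarrow> 'b) \<Rightarrow> ('a \<Rightarrow> 'b) \<Rightarrow> ('a \<Rightarrow> 'b) \<Rightarrow> bool" where
  "isotopism G m H n U V W \<longleftrightarrow> bij_betw U G H \<and> bij_betw V G H \<and> bij_betw W G H
     \<and> (\<forall>x\<in>G. \<forall>y\<in>G. n (U x) (V y) = W (m x y))"

definition autotopism :: "'a set \<Rightarrow> ('a \<Rightarrow> 'a \<Rightarrow> 'a)
    \<Rightarrow> ('a \<Rightarrow> 'a) \<Rightarrow> ('a \<Rightarrow> 'a) \<Rightarrow> ('a \<Rightarrow> 'a) \<Rightarrow> bool" where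
  "autotopism G m U V W \<longleftrightarrow> isotopism G m G m U V W"

definition loop_isomorphism :: "'a set \<Rightarrow> ('a \<Rightarrow> 'a \<Rightarrow> 'a) \<Rightarrow> 'b set \<Rightarrow> ('b \<Rightarrow> 'b \<Rightarrow> 'b)
    \<Rightarrow> ('a \<Rightarrow> 'b) \<Rightarrow> bool" where
  "loop_isomorphism G m H n f \<longleftrightarrow> bij_betw f G H \<and> (\<forall>x\<in>G. \<forall>y\<in>G. f (m x y) = n (f x) (f y))"

end

theory Submission
  imports Defs
begin

(*
  Write J for the right-inverse map of G.
  (1) In any loop, each of the two hypotheses on (xy)^rho / (xy)^lambda forces
      x^lambda = x^rho and J(xy) = Jx Jy: the inverse map is an automorphism.
  (2) Combined with the weak inverse property this gives the cross inverse
      property (xy) Jx = y.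
  (3) For an isotopism (A,B,C) between arbitrary loops, A = R_b C and B = L_a C
      with a = e'A^-1, b = e'B^-1; hence C is an isomorphism iff
      (xb)(ay) = xy for all x, y, while (L_b,R_a,I) is an autotopism iff
      (bx)(ya) = xy for all x, y.
  (4) In a CIP loop with automorphic inverse, either of these two identities
      forces b = Ja and makes a (hence b) central, after which the two
      identities coincide.
  (5) Isomorphisms transport the cross inverse property from G to H; the
      remaining claims are instances of the identity (bx)(ya) = xy.
*)

locale loop_on =
  fixes G :: "'a set" and m :: "'a \<Rightarrow> 'a \<Rightarrow> 'a" and e :: 'a
  assumes is_loop: "loop G m e"
begin

lemma unit_closed [simp]: "e \<in> G"
  using is_loop unfolding loop_def by (elim conjE)

lemma mult_closed [simp]: "x \<in> G \<Longrightarrow> y \<in> G \<Longrightarrow> m x y \<in> G"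
  using is_loop unfolding loop_def by (elim conjE) blast

lemma left_unit [simp]: "x \<in> G \<Longrightarrow> m e x = x"
  and right_unit [simp]: "x \<in> G \<Longrightarrow> m x e = x"
  using is_loop unfolding loop_def by (elim conjE; blast)+

lemma divisions: "\<forall>a\<in>G. \<forall>b\<in>G. (\<exists>!x. x \<in> G \<and> m a x = b) \<and> (\<exists>!y. y \<in> G \<and> m y a = b)"
  using is_loop unfolding loop_def by (elim conjE)

lemma left_division: "a \<in> G \<Longrightarrow> b \<in> G \<Longrightarrow> \<exists>!x. x \<in> G \<and> m a x = b"
  using divisions[rule_format] by (rule conjunct1)

lemma right_division: "a \<in> G \<Longrightarrow> b \<in> G \<Longrightarrow> \<exists>!y. y \<in> G \<and> m y a = b"
  using divisions[rule_format] by (rule conjunct2)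

lemma left_cancel: "\<lbrakk>a \<in> G; x \<in> G; y \<in> G; m a x = m a y\<rbrakk> \<Longrightarrow> x = y"
  using left_division[of a "m a x"] by (metis mult_closed)

lemma right_cancel: "\<lbrakk>a \<in> G; x \<in> G; y \<in> G; m x a = m y a\<rbrakk> \<Longrightarrow> x = y"
  using right_division[of a "m x a"] by (metis mult_closed)

lemma left_solvable: "a \<in> G \<Longrightarrow> b \<in> G \<Longrightarrow> \<exists>x\<in>G. m a x = b"
  using left_division by (metis ex1_implies_ex)

lemma right_solvable: "a \<in> G \<Longrightarrow> b \<in> G \<Longrightarrow> \<exists>y\<in>G. m y a = b"
  using right_division by (metis ex1_implies_ex)

lemma left_translation_bij: "b \<in> G \<Longrightarrow> bij_betw (m b) G G"
  by (rule bij_betw_imageI) (auto intro: inj_onI left_cancel dest: left_solvable)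

lemma right_translation_bij: "a \<in> G \<Longrightarrow> bij_betw (\<lambda>x. m x a) G G"
  by (rule bij_betw_imageI) (auto intro: inj_onI right_cancel dest: right_solvable)

lemma rinv_closed [simp]: "x \<in> G \<Longrightarrow> rinv G m e x \<in> G"
  and rinv_right [simp]: "x \<in> G \<Longrightarrow> m x (rinv G m e x) = e"
  using theI'[OF left_division[of x e]] by (simp_all add: rinv_def)

lemma linv_closed [simp]: "x \<in> G \<Longrightarrow> linv G m e x \<in> G"
  and linv_left [simp]: "x \<in> G \<Longrightarrow> m (linv G m e x) x = e"
  using theI'[OF right_division[of x e]] by (simp_all add: linv_def)

lemma rinv_unique: "\<lbrakk>x \<in> G; y \<in> G; m x y = e\<rbrakk> \<Longrightarrow> rinv G m e x = y"
  by (rule left_cancel[of x]) simp_all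

lemma linv_unique: "\<lbrakk>x \<in> G; y \<in> G; m y x = e\<rbrakk> \<Longrightarrow> linv G m e x = y"
  by (rule right_cancel[of x]) simp_all

end

section \<open>Loops whose inverse map is an automorphism\<close>

locale inverse_automorphic_loop = loop_on +
  assumes linv_eq_rinv: "x \<in> G \<Longrightarrow> linv G m e x = rinv G m e x"
    and rinv_mult: "\<lbrakk>x \<in> G; y \<in> G\<rbrakk> \<Longrightarrow>
                      rinv G m e (m x y) = m (rinv G m e x) (rinv G m e y)"
begin

abbreviation J :: "'a \<Rightarrow> 'a" where "J \<equiv> rinv G m e"

lemma rinv_left [simp]: "x \<in> G \<Longrightarrow> m (J x) x = e"
  using linv_left linv_eq_rinv by metis

lemma rinv_rinv [simp]: "x \<in> G \<Longrightarrow> J (J x) = x"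
  by (rule rinv_unique) simp_all

lemma left_inverse_is_rinv: "\<lbrakk>a \<in> G; b \<in> G; m b a = e\<rbrakk> \<Longrightarrow> b = J a"
  using linv_unique linv_eq_rinv by metis

end

lemma (in loop_on) inverse_automorphic_if_inverse_condition:
  assumes cond: "(\<forall>x\<in>G. \<forall>y\<in>G. rinv G m e (m x y) = m (rinv G m e x) (linv G m e y))
             \<or> (\<forall>x\<in>G. \<forall>y\<in>G. linv G m e (m x y) = m (linv G m e x) (rinv G m e y))"
  shows "inverse_automorphic_loop G m e"
proof -
  have two_sided: "linv G m e x = rinv G m e x" if x: "x \<in> G" for x
    using cond
  proof
    assume c: "\<forall>x\<in>G. \<forall>y\<in>G. rinv G m e (m x y) = m (rinv G m e x) (linv G m e y)"
    have "rinv G m e (linv G m e x) = x"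
      using x by (intro rinv_unique) simp_all
    moreover have "rinv G m e e = e"
      by (rule rinv_unique) simp_all
    ultimately have "e = m x (linv G m e x)"
      using c x by (metis linv_closed linv_left)
    then show ?thesis
      using x by (metis rinv_unique linv_closed)
  next
    assume c: "\<forall>x\<in>G. \<forall>y\<in>G. linv G m e (m x y) = m (linv G m e x) (rinv G m e y)"
    have "linv G m e e = e"
      by (rule linv_unique) simp_all
    then have "m (linv G m e x) (rinv G m e (rinv G m e x)) = e"
      using c x by (metis rinv_closed rinv_right)
    then have "rinv G m e (linv G m e x) = rinv G m e (rinv G m e x)"
      using x by (metis rinv_unique linv_closed rinv_closed)
    moreover have "rinv G m e (linv G m e x) = x"
      using x by (intro rinv_unique) simp_all
    ultimately have "m (rinv G m e x) x = e"
      using x by (metis rinv_closed rinv_right)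
    then show ?thesis
      using x by (simp add: linv_unique)
  qed
  have "rinv G m e (m x y) = m (rinv G m e x) (rinv G m e y)" if "x \<in> G" "y \<in> G" for x y
    using cond that two_sided by auto
  with two_sided show ?thesis
    by unfold_locales
qed

section \<open>The cross inverse property\<close>

text \<open>Step (2): in a loop with automorphic inverse, the weak inverse property
  y J(xy) = Jx turns into y (x Jy) = x, and cancelling x gives the cross inverse
  property (xy) Jx = y.\<close>

lemma (in inverse_automorphic_loop) cross_inverse_if_weak_inverse:
  assumes wip: "\<forall>x\<in>G. \<forall>y\<in>G. \<forall>z\<in>G. m (m x y) z = e \<longrightarrow> m x (m y z) = e"
    and x: "x \<in> G" and y: "y \<in> G"
  shows "m (m x y) (J x) = y"
proof -
  have left_form: "m u (m v (J u)) = v" if "u \<in> G" "v \<in> G" for u v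
  proof -
    have "m (J v) (m u (J (m (J v) u))) = e"
      using wip[rule_format, of "J v" u "J (m (J v) u)"] that by simp
    then have "m u (J (m (J v) u)) = J (J v)"
      using that by (intro rinv_unique[symmetric]) simp_all
    then show ?thesis
      using that by (simp add: rinv_mult)
  qed
  have "m x (m (m x y) (J x)) = m x y"
    using x y by (intro left_form) simp_all
  then show ?thesis
    using x y left_cancel by (metis mult_closed rinv_closed)
qed

locale cross_inverse_loop = inverse_automorphic_loop +
  assumes cross_right: "\<lbrakk>x \<in> G; y \<in> G\<rbrakk> \<Longrightarrow> m (m x y) (J x) = y"
begin

lemma cipl: "cipl G m e"
  using is_loop cross_right by (simp add: cipl_def)

end

section \<open>Central elements and the two shift identities\<close>

definition central :: "'a set \<Rightarrow> ('a \<Rightarrow> 'a \<Rightarrow> 'a) \<Rightarrow> 'a \<Rightarrow> bool" where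
  "central G m c \<longleftrightarrow> (\<forall>x\<in>G. m c x = m x c)"

lemma (in inverse_automorphic_loop) central_rinv:
  assumes c: "c \<in> G" "central G m c"
  shows "central G m (J c)"
  unfolding central_def
proof
  fix x assume x: "x \<in> G"
  have "m (J c) x = J (m c (J x))"
    using c x by (simp add: rinv_mult)
  also have "\<dots> = J (m (J x) c)"
    using c x by (simp add: central_def)
  also have "\<dots> = m x (J c)"
    using c x by (simp add: rinv_mult)
  finally show "m (J c) x = m x (J c)" .
qed

context cross_inverse_loop
begin

lemma central_if_left_shift:
  assumes a: "a \<in> G" and b: "b \<in> G"
    and P: "\<forall>x\<in>G. \<forall>y\<in>G. m (m x b) (m a y) = m x y"
  shows "m b a = e \<and> central G m a"
proof
  show "m b a = e"
    using P[rule_format, of e e] a b by simp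
  then have bJ: "b = J a"
    using a b by (intro left_inverse_is_rinv)
  show "central G m a"
    unfolding central_def
  proof
    fix v assume v: "v \<in> G"
    have "m (m (m v a) b) a = m v a"
      using P[rule_format, of "m v a" e] a b v by simp
    then have "m (m v a) b = v"
      using a b v right_cancel by (metis mult_closed)
    moreover have "m (m a v) b = v"
      using cross_right[of a v] a v bJ by simp
    ultimately show "m a v = m v a"
      using a b v right_cancel by (metis mult_closed)
  qed
qed

lemma central_if_right_shift:
  assumes a: "a \<in> G" and b: "b \<in> G"
    and Q: "\<forall>x\<in>G. \<forall>y\<in>G. m (m b x) (m y a) = m x y"
  shows "m b a = e \<and> central G m a"
proof
  show ba: "m b a = e"
    using Q[rule_format, of e e] a b by simp
  show "central G m a"
    unfolding central_def
  proof
    fix x assume x: "x \<in> G"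
    show "m a x = m x a"
      using Q[rule_format, of a x] a x ba by simp
  qed
qed

text \<open>Under either identity both a and b = Ja are central, so the left-hand sides
  (xb)(ay) and (bx)(ya) agree and the two identities are equivalent.\<close>
lemma shift_identities_equiv:
  assumes a: "a \<in> G" and b: "b \<in> G"
  shows "(\<forall>x\<in>G. \<forall>y\<in>G. m (m x b) (m a y) = m x y) \<longleftrightarrow>
         (\<forall>x\<in>G. \<forall>y\<in>G. m (m b x) (m y a) = m x y)"
    (is "?P \<longleftrightarrow> ?Q")
proof -
  have "m (m x b) (m a y) = m (m b x) (m y a)" if "?P \<or> ?Q" "x \<in> G" "y \<in> G" for x y
  proof -
    have "m b a = e \<and> central G m a"
      using that(1) central_if_left_shift central_if_right_shift a b by blast
    then have "central G m a" and "b = J a"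
      using a b left_inverse_is_rinv by blast+
    then have "central G m a" "central G m b"
      using a central_rinv by simp_all
    then have "m x b = m b x" "m a y = m y a"
      using that(2,3) unfolding central_def by metis+
    then show ?thesis
      by (simp only:)
  qed
  then show ?thesis by auto
qed

end

section \<open>Isotopisms and translations\<close>

lemma isotopism_factors:
  assumes H: "loop_on H n e'"
    and iso: "isotopism G m H n A B C"
    and a_def: "a = inv_into G A e'" and b_def: "b = inv_into G B e'"
  shows "a \<in> G" "b \<in> G" "\<And>x. x \<in> G \<Longrightarrow> A x = C (m x b)"
    "\<And>y. y \<in> G \<Longrightarrow> B y = C (m a y)"
proof -
  interpret H: loop_on H n e' by (fact H)
  have bij: "bij_betw A G H" "bij_betw B G H"
    and hom: "\<And>x y. x \<in> G \<Longrightarrow> y \<in> G \<Longrightarrow> n (A x) (B y) = C (m x y)"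
    using iso by (auto simp: isotopism_def)
  have "e' \<in> A ` G" "e' \<in> B ` G"
    using bij by (simp_all add: bij_betw_def)
  then have a: "a \<in> G" and b: "b \<in> G" and Aa: "A a = e'" and Bb: "B b = e'"
    by (simp_all add: a_def b_def inv_into_into f_inv_into_f)
  then show "a \<in> G" "b \<in> G" by simp_all
  show "A x = C (m x b)" if "x \<in> G" for x
    using hom[of x b] b Bb that bij_betwE[OF bij(1)] by simp
  show "B y = C (m a y)" if "y \<in> G" for y
    using hom[of a y] a Aa that bij_betwE[OF bij(2)] by simp
qed

lemma isomorphism_iff_left_shift:
  assumes G: "loop_on G m e" and H: "loop_on H n e'"
    and iso: "isotopism G m H n A B C"
    and a_def: "a = inv_into G A e'" and b_def: "b = inv_into G B e'"
  shows "loop_isomorphism G m H n C \<longleftrightarrow> (\<forall>x\<in>G. \<forall>y\<in>G. m (m x b) (m a y) = m x y)"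
proof -
  interpret G: loop_on G m e by (fact G)
  note fac = isotopism_factors[OF H iso a_def b_def]
  have bijC: "bij_betw C G H"
    and hom: "\<And>x y. x \<in> G \<Longrightarrow> y \<in> G \<Longrightarrow> n (A x) (B y) = C (m x y)"
    using iso by (auto simp: isotopism_def)
  have shifted: "n (C (m x b)) (C (m a y)) = C (m x y)" if "x \<in> G" "y \<in> G" for x y
    using hom that fac by simp
  have injC: "inj_on C G"
    using bijC by (simp add: bij_betw_def)
  show ?thesis
  proof
    assume "loop_isomorphism G m H n C"
    then have homC: "\<And>u v. u \<in> G \<Longrightarrow> v \<in> G \<Longrightarrow> C (m u v) = n (C u) (C v)"
      by (simp add: loop_isomorphism_def)
    show "\<forall>x\<in>G. \<forall>y\<in>G. m (m x b) (m a y) = m x y"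
    proof (intro ballI)
      fix x y assume xy: "x \<in> G" "y \<in> G"
      have "C (m (m x b) (m a y)) = C (m x y)"
        using homC[of "m x b" "m a y"] shifted[OF xy] xy fac(1,2) by simp
      then show "m (m x b) (m a y) = m x y"
        using injC xy fac(1,2) by (simp add: inj_on_eq_iff)
    qed
  next
    assume P: "\<forall>x\<in>G. \<forall>y\<in>G. m (m x b) (m a y) = m x y"
    have "C (m u v) = n (C u) (C v)" if uG: "u \<in> G" and vG: "v \<in> G" for u v
    proof -
      obtain x where x: "x \<in> G" and u: "u = m x b"
        using G.right_solvable[of b u] fac(2) uG by metis
      obtain y where y: "y \<in> G" and v: "v = m a y"
        using G.left_solvable[of a v] fac(1) vG by metis
      note xy = x y
      have "C (m u v) = C (m x y)"
        using P xy u v by simp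
      also have "\<dots> = n (C u) (C v)"
        using shifted[OF xy] u v by simp
      finally show ?thesis .
    qed
    with bijC show "loop_isomorphism G m H n C"
      by (simp add: loop_isomorphism_def)
  qed
qed

lemma (in loop_on) translation_autotopism_iff:
  assumes "a \<in> G" "b \<in> G"
  shows "autotopism G m (m b) (\<lambda>x. m x a) id \<longleftrightarrow>
         (\<forall>x\<in>G. \<forall>y\<in>G. m (m b x) (m y a) = m x y)"
  using assms left_translation_bij right_translation_bij
  by (simp add: autotopism_def isotopism_def)

lemma cipl_transfer:
  assumes G: "loop_on G m e" and H: "loop_on H n e'"
    and C: "loop_isomorphism G m H n C" and cipG: "cipl G m e"
  shows "cipl H n e'"
proof -
  interpret G: loop_on G m e by (fact G)
  interpret H: loop_on H n e' by (fact H)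
  have bij: "bij_betw C G H"
    and hom: "\<And>x y. x \<in> G \<Longrightarrow> y \<in> G \<Longrightarrow> C (m x y) = n (C x) (C y)"
    using C by (auto simp: loop_isomorphism_def)
  have CG: "x \<in> G \<Longrightarrow> C x \<in> H" for x
    using bij bij_betwE by blast
  have CeH: "C e \<in> H"
    using CG by simp
  have "n (C e) (C e) = C e"
    using hom[of e e] by (metis G.unit_closed G.left_unit)
  also have "\<dots> = n (C e) e'"
    using CeH by simp
  finally have Ce: "C e = e'"
    by (rule H.left_cancel[OF CeH CeH H.unit_closed])
  have Crinv: "rinv H n e' (C x) = C (rinv G m e x)" if x: "x \<in> G" for x
  proof (rule H.rinv_unique)
    show "n (C x) (C (rinv G m e x)) = e'"
      using hom[of x "rinv G m e x"] x Ce by simp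
  qed (use x CG in simp_all)
  have "n (n X Y) (rinv H n e' X) = Y" if XY: "X \<in> H" "Y \<in> H" for X Y
  proof -
    obtain x y where xy: "x \<in> G" "y \<in> G" and "X = C x" "Y = C y"
      using XY bij by (auto simp: bij_betw_def)
    moreover have "m (m x y) (rinv G m e x) = y"
      using cipG xy by (simp add: cipl_def)
    ultimately show ?thesis
      using Crinv hom xy by (metis G.mult_closed G.rinv_closed)
  qed
  then show ?thesis
    using H.is_loop by (simp add: cipl_def)
qed

theorem mainTheorem4:
  fixes G :: "'a set" and m :: "'a \<Rightarrow> 'a \<Rightarrow> 'a" and e :: 'a
    and H :: "'b set" and n :: "'b \<Rightarrow> 'b \<Rightarrow> 'b" and e' :: 'b
    and A B C :: "'a \<Rightarrow> 'b"
  assumes wG: "wipl G m e"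
    and wH: "wipl H n e'"
    and iso: "isotopism G m H n A B C"
    and cond: "(\<forall>x\<in>G. \<forall>y\<in>G. rinv G m e (m x y) = m (rinv G m e x) (linv G m e y))
             \<or> (\<forall>x\<in>G. \<forall>y\<in>G. linv G m e (m x y) = m (linv G m e x) (rinv G m e y))"
  defines "a \<equiv> inv_into G A e'" and "b \<equiv> inv_into G B e'"
  shows "(loop_isomorphism G m H n C \<longleftrightarrow> autotopism G m (\<lambda>x. m b x) (\<lambda>x. m x a) id)
    \<and> (loop_isomorphism G m H n C \<longrightarrow>
         cipl G m e \<and> cipl H n e' \<and> (\<forall>x\<in>G. m b (m x a) = x) \<and> m b a = e)"
proof -
  have G: "loop_on G m e" and H: "loop_on H n e'"
    using wG wH by (simp_all add: wipl_def loop_on_def)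
  interpret G: inverse_automorphic_loop G m e
    using loop_on.inverse_automorphic_if_inverse_condition[OF G cond] .
  interpret G: cross_inverse_loop G m e
    using G.cross_inverse_if_weak_inverse wG by unfold_locales (simp add: wipl_def)
  have a_eq: "a = inv_into G A e'" and b_eq: "b = inv_into G B e'"
    by (simp_all add: a_def b_def)
  have ab: "a \<in> G" "b \<in> G"
    using isotopism_factors[OF H iso a_eq b_eq] by simp_all
  have main: "loop_isomorphism G m H n C \<longleftrightarrow>
      (\<forall>x\<in>G. \<forall>y\<in>G. m (m b x) (m y a) = m x y)"
    using isomorphism_iff_left_shift[OF G H iso a_eq b_eq] G.shift_identities_equiv[OF ab]
    by (rule trans)
  have consequences: "(\<forall>x\<in>G. m b (m x a) = x) \<and> m b a = e"
    if "\<forall>x\<in>G. \<forall>y\<in>G. m (m b x) (m y a) = m x y"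
    using that ab by (metis G.unit_closed G.left_unit G.right_unit)
  show ?thesis
    using main G.translation_autotopism_iff[OF ab] G.cipl cipl_transfer[OF G H] consequences
    by blast
qed

end
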